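(* Under Assumptions (A1), (A2) and (A4) of the context, for every $\zeta>0$ there exist $M\in\mathbb N_+$ and $\lambda>0$ such that $$\|z\|_{\mathrm D(A)}^2+2\lambda\|\mathfrak d(z)\|^2_{\mathbb R^{M_\sigma}}\ge\zeta\|z\|_V^2\qquad\text{for all }z\in\mathrm D(A).$$ Moreover $M$ can be chosen depending only on $\zeta$ (nondecreasingly), and $\lambda$ depending only on $\zeta$ and $\varpi_M$ (nondecreasingly), where $\varpi_M>0$ is a constant such that $\|\Psi^\diamond v\|^2_{\mathrm D(A)}\le\varpi_M\|\Psi^\diamond v\|_V^2$ and $\|\Psi^\diamond v\|_V^2\le\varpi_M\|v\|^2_{\mathbb R^{M_\sigma}}$ for all $v\in\mathbb R^{M_\sigma}$.
   Context: $H$ real Hilbert space identified with its dual, $V\subseteq H$ real Hilbert space. (A1) $A\in\mathcal L(V,V')$ symmetric with $(y,z)\mapsto\langle Ay,z\rangle_{V',V}$ a complete scalar product on $V$; $V$ carries the scalar product $(y,z)_V:=\langle Ay,z\rangle_{V',V}$. (A2) $V\subseteq H$ is dense, continuous, compact. $\mathrm D(A):=\{h\in H\mid Ah\in H\}$ with norm $\|z\|_{\mathrm D(A)}:=\|Az\|_H$; $\mathrm D(A)'$ its dual, pairing $\langle\cdot,\cdot\rangle$. (A4) $\sigma:\mathbb N_+\to\mathbb N_+$ strictly increasing, $M_\sigma:=\sigma(M)$; for each $M$, linearly independent actuators $\mathfrak d^{M,j}\in\mathrm D(A)'$, $1\le j\le M_\sigma$, and linearly independent $\Psi^{M,j}\in\mathrm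 D(A)$, $1\le j\le M_\sigma$, with $\langle\mathfrak d^{M,j},\Psi^{M,i}\rangle=\delta_{ij}$; with $\mathrm D_M:=\{z\in\mathrm D(A)\mid\langle\mathfrak d^{M,j},z\rangle=0\ \forall j\}$, the constant $\xi_{M_+}:=\inf_{\Theta\in\mathrm D_M\setminus\{0\}}\|\Theta\|^2_{\mathrm D(A)}/\|\Theta\|_V^2$ satisfies $\xi_{M_+}\to+\infty$ as $M\to\infty$. Notation: $\mathfrak d(z):=(\langle\mathfrak d^{M,1},z\rangle,\dots,\langle\mathfrak d^{M,M_\sigma},z\rangle)\in\mathbb R^{M_\sigma}$ for $z\in\mathrm D(A)$, and $\Psi^\diamond v:=\sum_{j=1}^{M_\sigma}v_j\Psi^{M,j}$ for $v\in\mathbb R^{M_\sigma}$. *)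

theory Defs
  imports "HOL-Analysis.Analysis"
begin

text \<open>H is a real Hilbert space (type 'a). V is a linear subspace of H;
 the operator A in L(V,V') is encoded by its bilinear form a y z = <A y, z>_{V',V}, which is
 the scalar product of V. D(A) = {h in H | A h in H}: those h in V for which the functional
 a h . is represented by an element f of H, i.e. a h v = (f, v)_H for all v in V; then A h = f.\<close>

definition DA :: "'a::real_inner set \<Rightarrow> ('a \<Rightarrow> 'a \<Rightarrow> real) \<Rightarrow> 'a set" where
  "DA V a = {h \<in> V. \<exists>f. \<forall>v\<in>V. a h v = inner f v}"

definition Aop :: "'a::real_inner set \<Rightarrow> ('a \<Rightarrow> 'a \<Rightarrow> real) \<Rightarrow> 'a \<Rightarrow> 'a" where
  "Aop V a h = (THE f. \<forall>v\<in>V. a h v = inner f v)"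

text \<open>norm on D(A): norm (A z) in H; squared V-norm: a z z.\<close>

text \<open>Actuators: d M j z = <d^{M,j}, z>; Psi M j = Psi^{M,j}; sigma M = M_sigma.\<close>

definition DM :: "'a::real_inner set \<Rightarrow> ('a \<Rightarrow> 'a \<Rightarrow> real) \<Rightarrow> (nat \<Rightarrow> nat \<Rightarrow> 'a \<Rightarrow> real)
    \<Rightarrow> (nat \<Rightarrow> nat) \<Rightarrow> nat \<Rightarrow> 'a set" where
  "DM V a d \<sigma> M = {z \<in> DA V a. \<forall>j\<in>{1..\<sigma> M}. d M j z = 0}"

text \<open>xi_{M+} as an extended real infimum (infimum of the empty set is +infinity).\<close>
definition xiM :: "'a::real_inner set \<Rightarrow> ('a \<Rightarrow> 'a \<Rightarrow> real) \<Rightarrow> (nat \<Rightarrow> nat \<Rightarrow> 'a \<Rightarrow> real)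
    \<Rightarrow> (nat \<Rightarrow> nat) \<Rightarrow> nat \<Rightarrow> ereal" where
  "xiM V a d \<sigma> M = Inf {ereal ((norm (Aop V a \<Theta>))\<^sup>2 / a \<Theta> \<Theta>) | \<Theta>. \<Theta> \<in> DM V a d \<sigma> M \<and> \<Theta> \<noteq> 0}"

definition Psi_dia :: "(nat \<Rightarrow> nat \<Rightarrow> 'a::real_vector) \<Rightarrow> (nat \<Rightarrow> nat) \<Rightarrow> nat \<Rightarrow> (nat \<Rightarrow> real) \<Rightarrow> 'a" where
  "Psi_dia \<Psi> \<sigma> M v = (\<Sum>j=1..\<sigma> M. v j *\<^sub>R \<Psi> M j)"

definition dnorm2 :: "(nat \<Rightarrow> nat \<Rightarrow> 'a \<Rightarrow> real) \<Rightarrow> (nat \<Rightarrow> nat) \<Rightarrow> nat \<Rightarrow> 'a \<Rightarrow> real" where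
  "dnorm2 d \<sigma> M z = (\<Sum>j=1..\<sigma> M. (d M j z)\<^sup>2)"

definition varpi_ok :: "'a::real_inner set \<Rightarrow> ('a \<Rightarrow> 'a \<Rightarrow> real) \<Rightarrow> (nat \<Rightarrow> nat \<Rightarrow> 'a)
    \<Rightarrow> (nat \<Rightarrow> nat) \<Rightarrow> nat \<Rightarrow> real \<Rightarrow> bool" where
  "varpi_ok V a \<Psi> \<sigma> M w \<longleftrightarrow> w > 0 \<and>
     (\<forall>v. (norm (Aop V a (Psi_dia \<Psi> \<sigma> M v)))\<^sup>2
            \<le> w * a (Psi_dia \<Psi> \<sigma> M v) (Psi_dia \<Psi> \<sigma> M v)
        \<and> a (Psi_dia \<Psi> \<sigma> M v) (Psi_dia \<Psi> \<sigma> M v) \<le> w * (\<Sum>j=1..\<sigma> M. (v j)\<^sup>2))"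

end

theory Submission
  imports Defs
begin

text \<open>Split \<open>z \<in> D(A)\<close> as \<open>z = \<theta> + P\<close> with \<open>P = \<Psi>\<^sup>\<diamond>(d(z))\<close>. Biorthogonality gives
  \<open>d(\<theta>) = 0\<close>, so \<open>\<parallel>\<theta>\<parallel>\<^sup>2\<^bsub>D(A)\<^esub> \<ge> \<xi>\<^sub>M\<^sub>+ \<parallel>\<theta>\<parallel>\<^sup>2\<^sub>V \<ge> 4\<zeta> \<parallel>\<theta>\<parallel>\<^sup>2\<^sub>V\<close> once \<open>M\<close> is large.
  \<open>P\<close> ranges over a finite-dimensional space, so both its \<open>D(A)\<close>-norm and its \<open>V\<close>-norm are
  controlled by \<open>|d(z)|\<close>, with constants \<open>C\<^sub>A\<close>, \<open>C\<^sub>V\<close>. Using \<open>|x + y|\<^sup>2 \<le> 2|x|\<^sup>2 + 2|y|\<^sup>2\<close> in both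
  norms, \<open>\<zeta>\<parallel>z\<parallel>\<^sup>2\<^sub>V \<le> \<parallel>Az\<parallel>\<^sup>2 + (C\<^sub>A + 2\<zeta>C\<^sub>V)|d(z)|\<^sup>2\<close>; an admissible \<open>\<varpi>\<^sub>M\<close> provides
  \<open>C\<^sub>A = \<varpi>\<^sub>M\<^sup>2\<close> and \<open>C\<^sub>V = \<varpi>\<^sub>M\<close>, whence the monotone dependence of \<open>\<lambda>\<close>.\<close>

lemma power2_norm_sum_scaleR_le:
  fixes w :: "'i \<Rightarrow> 'b::real_normed_vector"
  shows "(norm (\<Sum>j\<in>F. v j *\<^sub>R w j))\<^sup>2 \<le> (\<Sum>j\<in>F. (norm (w j))\<^sup>2) * (\<Sum>j\<in>F. (v j)\<^sup>2)"
proof -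
  have "norm (\<Sum>j\<in>F. v j *\<^sub>R w j) \<le> (\<Sum>j\<in>F. \<bar>v j\<bar> * norm (w j))"
    by (rule order_trans[OF norm_sum]) simp
  hence "(norm (\<Sum>j\<in>F. v j *\<^sub>R w j))\<^sup>2 \<le> (\<Sum>j\<in>F. \<bar>v j\<bar> * norm (w j))\<^sup>2"
    by (intro power_mono) auto
  also have "\<dots> \<le> (\<Sum>j\<in>F. \<bar>v j\<bar>\<^sup>2) * (\<Sum>j\<in>F. (norm (w j))\<^sup>2)"
    by (rule Cauchy_Schwarz_ineq_sum)
  finally show ?thesis by (simp add: mult.commute)
qed

lemma power2_norm_diff_le:
  fixes x y :: "'b::real_normed_vector"
  shows "(norm (x - y))\<^sup>2 \<le> 2 * (norm x)\<^sup>2 + 2 * (norm y)\<^sup>2"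
proof -
  have "(norm (x - y))\<^sup>2 \<le> (norm x + norm y)\<^sup>2"
    by (intro power_mono norm_triangle_ineq4) simp
  also have "\<dots> \<le> 2 * (norm x)\<^sup>2 + 2 * (norm y)\<^sup>2"
    using sum_squares_bound[of "norm x" "norm y"] by (simp add: power2_sum)
  finally show ?thesis .
qed

lemma orthogonal_dense_eq_0:
  fixes f :: "'a::real_inner"
  assumes "closure V = UNIV" and "\<And>v. v \<in> V \<Longrightarrow> inner f v = 0"
  shows "f = 0"
proof -
  have "closed {v. inner f v = 0}"
    by (intro closed_Collect_eq continuous_on_inner continuous_on_const continuous_on_id)
  moreover have "V \<subseteq> {v. inner f v = 0}"
    using assms(2) by blast
  ultimately have "closure V \<subseteq> {v. inner f v = 0}"
    by (rule closure_minimal[rotated])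
  with assms(1) have "inner f f = 0" by blast
  then show ?thesis by simp
qed

lemma tendsto_PInfty_threshold:
  fixes f :: "nat \<Rightarrow> ereal"
  assumes "(f \<longlongrightarrow> \<infinity>) sequentially"
  obtains N :: "real \<Rightarrow> nat" where "mono N" and "\<And>c. N c \<ge> 1"
    and "\<And>c n. n \<ge> N c \<Longrightarrow> ereal c \<le> f n"
proof
  define P where "P c n \<longleftrightarrow> n \<ge> 1 \<and> (\<forall>m\<ge>n. ereal c \<le> f m)" for c n
  have P_ex: "\<exists>n. P c n" for c
  proof -
    from assms obtain n0 where "\<And>m. m \<ge> n0 \<Longrightarrow> ereal c < f m"
      by (auto simp: tendsto_PInfty eventually_sequentially)
    then show ?thesis
      by (intro exI[of _ "max n0 1"]) (auto simp: P_def intro: less_imp_le)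
  qed
  have P_Least: "P c (LEAST n. P c n)" for c
    using P_ex by (rule LeastI_ex)
  show "mono (\<lambda>c. LEAST n. P c n)"
  proof (rule monoI)
    fix c c' :: real assume "c \<le> c'"
    then have "ereal c \<le> ereal c'" by simp
    with P_Least[of c'] have "P c (LEAST n. P c' n)"
      unfolding P_def by (meson order_trans)
    then show "(LEAST n. P c n) \<le> (LEAST n. P c' n)" by (rule Least_le)
  qed
  show "(LEAST n. P c n) \<ge> 1" for c
    using P_Least[of c] unfolding P_def by blast
  show "ereal c \<le> f n" if "n \<ge> (LEAST n. P c n)" for c n
    using P_Least[of c] that unfolding P_def by blast
qed

locale dense_form =
  fixes V :: "'a::real_inner set" and a :: "'a \<Rightarrow> 'a \<Rightarrow> real"
  assumes V_subspace: "subspace V"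
    and a_add: "\<And>x y z. x \<in> V \<Longrightarrow> y \<in> V \<Longrightarrow> z \<in> V \<Longrightarrow> a (x + y) z = a x z + a y z"
    and a_scaleR: "\<And>c x z. x \<in> V \<Longrightarrow> z \<in> V \<Longrightarrow> a (c *\<^sub>R x) z = c * a x z"
    and a_sym: "\<And>x y. x \<in> V \<Longrightarrow> y \<in> V \<Longrightarrow> a x y = a y x"
    and a_pos: "\<And>x. x \<in> V \<Longrightarrow> x \<noteq> 0 \<Longrightarrow> a x x > 0"
    and V_dense: "closure V = UNIV"
begin

lemma DA_subset: "DA V a \<subseteq> V"
  by (auto simp: DA_def)

text \<open>Density of \<open>V\<close> makes the representing element unique, so the \<open>THE\<close> in \<^const>\<open>Aop\<close> is not junk.\<close>

lemma Aop_eqI: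
  assumes "h \<in> V" and "\<And>v. v \<in> V \<Longrightarrow> a h v = inner f v"
  shows "h \<in> DA V a" and "Aop V a h = f"
proof -
  show "h \<in> DA V a" using assms by (auto simp: DA_def)
  have "g = f" if "\<forall>v\<in>V. a h v = inner g v" for g
    using that assms(2) orthogonal_dense_eq_0[OF V_dense, of "g - f"]
    by (simp add: inner_diff_left)
  with assms(2) show "Aop V a h = f"
    unfolding Aop_def by (intro the_equality) auto
qed

lemma Aop_inner:
  assumes "h \<in> DA V a" and "v \<in> V"
  shows "a h v = inner (Aop V a h) v"
proof -
  from assms(1) obtain f where f: "\<forall>v\<in>V. a h v = inner f v" and "h \<in> V"
    by (auto simp: DA_def)
  then have "Aop V a h = f" by (intro Aop_eqI) auto
  with f assms(2) show ?thesis by simp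
qed

lemma a_0_left: "z \<in> V \<Longrightarrow> a 0 z = 0"
  using a_scaleR[of 0 z 0] subspace_0[OF V_subspace] by simp

lemma a_nonneg: "x \<in> V \<Longrightarrow> a x x \<ge> 0"
  using a_pos[of x] a_0_left[of 0] by (cases "x = 0") auto

lemma DA_0: "0 \<in> DA V a" and Aop_0: "Aop V a 0 = 0"
  using Aop_eqI[of 0 0] subspace_0[OF V_subspace] a_0_left by auto

lemma
  assumes "x \<in> DA V a" and "y \<in> DA V a"
  shows DA_add: "x + y \<in> DA V a" and Aop_add: "Aop V a (x + y) = Aop V a x + Aop V a y"
proof -
  have "x \<in> V" "y \<in> V" using assms DA_subset by auto
  then have xy: "x + y \<in> V" by (rule subspace_add[OF V_subspace])
  have rep: "a (x + y) v = inner (Aop V a x + Aop V a y) v" if "v \<in> V" for v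
    using that assms \<open>x \<in> V\<close> \<open>y \<in> V\<close> by (simp add: a_add Aop_inner inner_add_left)
  from Aop_eqI[OF xy rep] show "x + y \<in> DA V a" "Aop V a (x + y) = Aop V a x + Aop V a y"
    by auto
qed

lemma
  assumes "x \<in> DA V a"
  shows DA_scaleR: "c *\<^sub>R x \<in> DA V a" and Aop_scaleR: "Aop V a (c *\<^sub>R x) = c *\<^sub>R Aop V a x"
proof -
  have "x \<in> V" using assms DA_subset by auto
  then have cx: "c *\<^sub>R x \<in> V" by (rule subspace_scale[OF V_subspace])
  have rep: "a (c *\<^sub>R x) v = inner (c *\<^sub>R Aop V a x) v" if "v \<in> V" for v
    using that assms \<open>x \<in> V\<close> by (simp add: a_scaleR Aop_inner)
  from Aop_eqI[OF cx rep] show "c *\<^sub>R x \<in> DA V a" "Aop V a (c *\<^sub>R x) = c *\<^sub>R Aop V a x"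
    by auto
qed

lemma DA_diff: "x \<in> DA V a \<Longrightarrow> y \<in> DA V a \<Longrightarrow> x - y \<in> DA V a"
  and Aop_diff: "x \<in> DA V a \<Longrightarrow> y \<in> DA V a \<Longrightarrow> Aop V a (x - y) = Aop V a x - Aop V a y"
  using DA_add[of x "(-1) *\<^sub>R y"] Aop_add[of x "(-1) *\<^sub>R y"] DA_scaleR[of y "-1"]
    Aop_scaleR[of y "-1"] by auto

lemma DA_sum: "finite F \<Longrightarrow> (\<And>j. j \<in> F \<Longrightarrow> x j \<in> DA V a) \<Longrightarrow> (\<Sum>j\<in>F. x j) \<in> DA V a"
  and Aop_sum: "finite F \<Longrightarrow> (\<And>j. j \<in> F \<Longrightarrow> x j \<in> DA V a) \<Longrightarrow>
    Aop V a (\<Sum>j\<in>F. x j) = (\<Sum>j\<in>F. Aop V a (x j))"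
  by (induction F rule: finite_induct) (auto simp: DA_0 Aop_0 DA_add Aop_add)

lemma a_diff: "x \<in> V \<Longrightarrow> y \<in> V \<Longrightarrow> z \<in> V \<Longrightarrow> a (x - y) z = a x z - a y z"
  using a_add[of x "(-1) *\<^sub>R y" z] a_scaleR[of y z "-1"] subspace_scale[OF V_subspace, of y "-1"]
  by simp

lemma a_add_right: "x \<in> V \<Longrightarrow> y \<in> V \<Longrightarrow> z \<in> V \<Longrightarrow> a z (x + y) = a z x + a z y"
  using a_add[of x y z] a_sym subspace_add[OF V_subspace] by metis

lemma a_diff_right: "x \<in> V \<Longrightarrow> y \<in> V \<Longrightarrow> z \<in> V \<Longrightarrow> a z (x - y) = a z x - a z y"
  using a_diff[of x y z] a_sym subspace_diff[OF V_subspace] by metis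

lemma a_add_self_le:
  assumes "x \<in> V" "y \<in> V"
  shows "a (x + y) (x + y) \<le> 2 * a x x + 2 * a y y"
proof -
  have "x + y \<in> V" "x - y \<in> V"
    using subspace_add[OF V_subspace assms] subspace_diff[OF V_subspace assms] by auto
  with assms have "a (x + y) (x + y) + a (x - y) (x - y) = 2 * a x x + 2 * a y y"
    by (simp add: a_add a_diff a_add_right a_diff_right a_sym[of y x])
  with a_nonneg[OF \<open>x - y \<in> V\<close>] show ?thesis by linarith
qed

lemma xiM_le_imp_le:
  assumes "\<theta> \<in> DM V a d \<sigma> M" and "ereal c \<le> xiM V a d \<sigma> M"
  shows "c * a \<theta> \<theta> \<le> (norm (Aop V a \<theta>))\<^sup>2"
proof (cases "\<theta> = 0")
  case True
  then show ?thesis using a_0_left subspace_0[OF V_subspace] by (simp add: Aop_0)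
next
  case False
  have "\<theta> \<in> V" using assms(1) DA_subset by (auto simp: DM_def)
  with False have pos: "a \<theta> \<theta> > 0" by (rule a_pos[rotated])
  have "xiM V a d \<sigma> M \<le> ereal ((norm (Aop V a \<theta>))\<^sup>2 / a \<theta> \<theta>)"
    unfolding xiM_def using assms(1) False by (intro Inf_lower) blast
  with assms(2) have "ereal c \<le> ereal ((norm (Aop V a \<theta>))\<^sup>2 / a \<theta> \<theta>)"
    by (rule order_trans)
  with pos show ?thesis by (simp add: le_divide_eq)
qed

end

locale actuators = dense_form +
  fixes \<sigma> :: "nat \<Rightarrow> nat" and d :: "nat \<Rightarrow> nat \<Rightarrow> 'a::real_inner \<Rightarrow> real"
    and \<Psi> :: "nat \<Rightarrow> nat \<Rightarrow> 'a"
  assumes d_add: "\<And>M j y z. M \<ge> 1 \<Longrightarrow> j \<in> {1..\<sigma> M} \<Longrightarrow> y \<in> DA V a \<Longrightarrow> z \<in> DA V a \<Longrightarrow>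
      d M j (y + z) = d M j y + d M j z"
    and d_scaleR: "\<And>M j c z. M \<ge> 1 \<Longrightarrow> j \<in> {1..\<sigma> M} \<Longrightarrow> z \<in> DA V a \<Longrightarrow>
      d M j (c *\<^sub>R z) = c * d M j z"
    and \<Psi>_in_DA: "\<And>M j. M \<ge> 1 \<Longrightarrow> j \<in> {1..\<sigma> M} \<Longrightarrow> \<Psi> M j \<in> DA V a"
    and biorth: "\<And>M i j. M \<ge> 1 \<Longrightarrow> i \<in> {1..\<sigma> M} \<Longrightarrow> j \<in> {1..\<sigma> M} \<Longrightarrow>
      d M j (\<Psi> M i) = (if i = j then 1 else 0)"
begin

context
  fixes M j :: nat assumes M: "M \<ge> 1" and j: "j \<in> {1..\<sigma> M}"
begin

lemma d_diff: "y \<in> DA V a \<Longrightarrow> z \<in> DA V a \<Longrightarrow> d M j (y - z) = d M j y - d M j z"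
  using d_add[OF M j, of y "(-1) *\<^sub>R z"] d_scaleR[OF M j, of z "-1"] DA_scaleR[of z "-1"] by simp

lemma d_sum: "finite F \<Longrightarrow> (\<And>i. i \<in> F \<Longrightarrow> x i \<in> DA V a) \<Longrightarrow>
    d M j (\<Sum>i\<in>F. x i) = (\<Sum>i\<in>F. d M j (x i))"
proof (induction F rule: finite_induct)
  case empty
  show ?case using d_scaleR[OF M j DA_0, of 0] by simp
next
  case (insert i F)
  then show ?case by (simp add: d_add[OF M j] DA_sum)
qed

end

context
  fixes M :: nat assumes M: "M \<ge> 1"
begin

lemma scaleR_\<Psi>_in_DA: "j \<in> {1..\<sigma> M} \<Longrightarrow> c j *\<^sub>R \<Psi> M j \<in> DA V a"
  by (intro DA_scaleR \<Psi>_in_DA[OF M])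

lemma Psi_dia_in_DA: "Psi_dia \<Psi> \<sigma> M v \<in> DA V a"
  unfolding Psi_dia_def by (intro DA_sum scaleR_\<Psi>_in_DA) auto

lemma Aop_Psi_dia: "Aop V a (Psi_dia \<Psi> \<sigma> M v) = (\<Sum>j=1..\<sigma> M. v j *\<^sub>R Aop V a (\<Psi> M j))"
proof -
  have "Aop V a (Psi_dia \<Psi> \<sigma> M v) = (\<Sum>j=1..\<sigma> M. Aop V a (v j *\<^sub>R \<Psi> M j))"
    unfolding Psi_dia_def by (rule Aop_sum) (auto intro: scaleR_\<Psi>_in_DA)
  also have "\<dots> = (\<Sum>j=1..\<sigma> M. v j *\<^sub>R Aop V a (\<Psi> M j))"
    by (intro sum.cong refl Aop_scaleR \<Psi>_in_DA[OF M]) auto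
  finally show ?thesis .
qed

lemma d_Psi_dia:
  assumes i: "i \<in> {1..\<sigma> M}"
  shows "d M i (Psi_dia \<Psi> \<sigma> M v) = v i"
proof -
  have "d M i (Psi_dia \<Psi> \<sigma> M v) = (\<Sum>j=1..\<sigma> M. d M i (v j *\<^sub>R \<Psi> M j))"
    unfolding Psi_dia_def by (rule d_sum[OF M i]) (auto intro: scaleR_\<Psi>_in_DA)
  also have "\<dots> = (\<Sum>j=1..\<sigma> M. v j * (if j = i then 1 else 0))"
    by (intro sum.cong refl) (auto simp: d_scaleR[OF M i] \<Psi>_in_DA[OF M] biorth[OF M _ i])
  also have "\<dots> = v i" using i by (simp add: if_distrib cong: if_cong)
  finally show ?thesis .
qed

lemma residual_in_DM:
  assumes "z \<in> DA V a"
  shows "z - Psi_dia \<Psi> \<sigma> M (\<lambda>j. d M j z) \<in> DM V a d \<sigma> M"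
  using assms by (simp add: DM_def DA_diff Psi_dia_in_DA d_diff[OF M] d_Psi_dia)

lemma Psi_dia_bounds:
  obtains C\<^sub>A C\<^sub>V where "C\<^sub>A \<ge> 0" "C\<^sub>V \<ge> 0"
    and "\<And>v. (norm (Aop V a (Psi_dia \<Psi> \<sigma> M v)))\<^sup>2 \<le> C\<^sub>A * (\<Sum>j=1..\<sigma> M. (v j)\<^sup>2)"
    and "\<And>v. a (Psi_dia \<Psi> \<sigma> M v) (Psi_dia \<Psi> \<sigma> M v) \<le> C\<^sub>V * (\<Sum>j=1..\<sigma> M. (v j)\<^sup>2)"
proof
  define C\<^sub>A where "C\<^sub>A = (\<Sum>j=1..\<sigma> M. (norm (Aop V a (\<Psi> M j)))\<^sup>2)"
  define C\<^sub>H where "C\<^sub>H = (\<Sum>j=1..\<sigma> M. (norm (\<Psi> M j))\<^sup>2)"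
  have "C\<^sub>H \<ge> 0" by (simp add: C\<^sub>H_def sum_nonneg)
  moreover show "C\<^sub>A \<ge> 0" by (simp add: C\<^sub>A_def sum_nonneg)
  ultimately show "(C\<^sub>A + C\<^sub>H) / 2 \<ge> 0" by simp
  fix v
  let ?P = "Psi_dia \<Psi> \<sigma> M v" and ?S = "\<Sum>j=1..\<sigma> M. (v j)\<^sup>2"
  show A: "(norm (Aop V a ?P))\<^sup>2 \<le> C\<^sub>A * ?S"
    unfolding Aop_Psi_dia C\<^sub>A_def by (rule power2_norm_sum_scaleR_le)
  have H: "(norm ?P)\<^sup>2 \<le> C\<^sub>H * ?S"
    unfolding Psi_dia_def C\<^sub>H_def by (rule power2_norm_sum_scaleR_le)
  have "a ?P ?P = inner (Aop V a ?P) ?P"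
    using Psi_dia_in_DA DA_subset by (auto intro: Aop_inner)
  also have "\<dots> \<le> norm (Aop V a ?P) * norm ?P" by (rule norm_cauchy_schwarz)
  also have "\<dots> \<le> ((norm (Aop V a ?P))\<^sup>2 + (norm ?P)\<^sup>2) / 2"
    using sum_squares_bound[of "norm (Aop V a ?P)" "norm ?P"] by simp
  also have "\<dots> \<le> (C\<^sub>A + C\<^sub>H) / 2 * ?S" using A H by (simp add: field_simps)
  finally show "a ?P ?P \<le> (C\<^sub>A + C\<^sub>H) / 2 * ?S" .
qed

lemma coercive_estimate:
  assumes \<zeta>: "\<zeta> \<ge> 0" and xi: "ereal (4 * \<zeta>) \<le> xiM V a d \<sigma> M"
    and C\<^sub>A: "\<And>v. (norm (Aop V a (Psi_dia \<Psi> \<sigma> M v)))\<^sup>2 \<le> C\<^sub>A * (\<Sum>j=1..\<sigma> M. (v j)\<^sup>2)"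
    and C\<^sub>V: "\<And>v. a (Psi_dia \<Psi> \<sigma> M v) (Psi_dia \<Psi> \<sigma> M v) \<le> C\<^sub>V * (\<Sum>j=1..\<sigma> M. (v j)\<^sup>2)"
    and z: "z \<in> DA V a"
  shows "\<zeta> * a z z \<le> (norm (Aop V a z))\<^sup>2 + (C\<^sub>A + 2 * \<zeta> * C\<^sub>V) * dnorm2 d \<sigma> M z"
proof -
  define P where "P = Psi_dia \<Psi> \<sigma> M (\<lambda>j. d M j z)"
  define \<theta> where "\<theta> = z - P"
  have P: "P \<in> DA V a" by (simp add: P_def Psi_dia_in_DA)
  have \<theta>: "\<theta> \<in> DM V a d \<sigma> M" unfolding \<theta>_def P_def by (rule residual_in_DM[OF z])
  then have "\<theta> \<in> DA V a" by (simp add: DM_def)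
  have P_A: "(norm (Aop V a P))\<^sup>2 \<le> C\<^sub>A * dnorm2 d \<sigma> M z"
    using C\<^sub>A by (simp add: P_def dnorm2_def)
  have P_V: "a P P \<le> C\<^sub>V * dnorm2 d \<sigma> M z"
    using C\<^sub>V by (simp add: P_def dnorm2_def)
  have \<theta>_xi: "4 * \<zeta> * a \<theta> \<theta> \<le> (norm (Aop V a \<theta>))\<^sup>2"
    by (rule xiM_le_imp_le[OF \<theta> xi])
  have \<theta>_A: "(norm (Aop V a \<theta>))\<^sup>2 \<le> 2 * (norm (Aop V a z))\<^sup>2 + 2 * (norm (Aop V a P))\<^sup>2"
    unfolding \<theta>_def Aop_diff[OF z P] by (rule power2_norm_diff_le)
  have "a z z \<le> 2 * a \<theta> \<theta> + 2 * a P P"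
    using a_add_self_le[of \<theta> P] \<open>\<theta> \<in> DA V a\<close> P DA_subset by (auto simp: \<theta>_def)
  then have "\<zeta> * a z z \<le> 2 * (\<zeta> * a \<theta> \<theta>) + 2 * \<zeta> * a P P"
    using \<zeta> by (auto simp: algebra_simps dest: mult_left_mono[of _ _ \<zeta>])
  also have "\<dots> \<le> (norm (Aop V a z))\<^sup>2 + C\<^sub>A * dnorm2 d \<sigma> M z + 2 * \<zeta> * (C\<^sub>V * dnorm2 d \<sigma> M z)"
    using \<theta>_xi \<theta>_A P_A mult_left_mono[OF P_V, of "2 * \<zeta>"] \<zeta> by simp
  finally show ?thesis by (simp add: algebra_simps)
qed

lemma coercive_estimate_varpi:
  assumes "varpi_ok V a \<Psi> \<sigma> M \<omega>" and "\<zeta> \<ge> 0" and "ereal (4 * \<zeta>) \<le> xiM V a d \<sigma> M"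
    and "z \<in> DA V a"
  shows "\<zeta> * a z z \<le> (norm (Aop V a z))\<^sup>2 + (\<omega>\<^sup>2 + 2 * \<zeta> * \<omega>) * dnorm2 d \<sigma> M z"
proof (rule coercive_estimate[OF assms(2,3) _ _ assms(4)])
  let ?P = "\<lambda>v. Psi_dia \<Psi> \<sigma> M v" and ?S = "\<lambda>v. \<Sum>j=1..\<sigma> M. (v j)\<^sup>2"
  have \<omega>: "\<omega> > 0" and A: "(norm (Aop V a (?P v)))\<^sup>2 \<le> \<omega> * a (?P v) (?P v)"
    and V: "a (?P v) (?P v) \<le> \<omega> * ?S v" for v
    using assms(1) by (auto simp: varpi_ok_def)
  show "a (?P v) (?P v) \<le> \<omega> * ?S v" for v by (rule V)
  show "(norm (Aop V a (?P v)))\<^sup>2 \<le> \<omega>\<^sup>2 * ?S v" for v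
    using order_trans[OF A mult_left_mono[OF V less_imp_le[OF \<omega>]]]
    by (simp add: power2_eq_square mult.assoc)
qed

lemma coercive_estimate_exists:
  assumes "\<zeta> \<ge> 0" and "ereal (4 * \<zeta>) \<le> xiM V a d \<sigma> M"
  shows "\<exists>lam>0. \<forall>z\<in>DA V a. (norm (Aop V a z))\<^sup>2 + 2 * lam * dnorm2 d \<sigma> M z \<ge> \<zeta> * a z z"
proof -
  obtain C\<^sub>A C\<^sub>V where C: "C\<^sub>A \<ge> 0" "C\<^sub>V \<ge> 0"
    and A: "\<And>v. (norm (Aop V a (Psi_dia \<Psi> \<sigma> M v)))\<^sup>2 \<le> C\<^sub>A * (\<Sum>j=1..\<sigma> M. (v j)\<^sup>2)"
    and V: "\<And>v. a (Psi_dia \<Psi> \<sigma> M v) (Psi_dia \<Psi> \<sigma> M v) \<le> C\<^sub>V * (\<Sum>j=1..\<sigma> M. (v j)\<^sup>2)"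
    using Psi_dia_bounds by blast
  note estimate = coercive_estimate[OF assms A V]
  define c where "c = C\<^sub>A + 2 * \<zeta> * C\<^sub>V"
  have "c \<ge> 0"
    using C assms(1) unfolding c_def by (intro add_nonneg_nonneg mult_nonneg_nonneg) auto
  then have "(c + 1) / 2 > 0" by simp
  moreover have "(norm (Aop V a z))\<^sup>2 + 2 * ((c + 1) / 2) * dnorm2 d \<sigma> M z \<ge> \<zeta> * a z z"
    if "z \<in> DA V a" for z
  proof -
    have "dnorm2 d \<sigma> M z \<ge> 0" by (simp add: dnorm2_def sum_nonneg)
    moreover have "2 * ((c + 1) / 2) * dnorm2 d \<sigma> M z = c * dnorm2 d \<sigma> M z + dnorm2 d \<sigma> M z"
      by (simp add: algebra_simps)
    ultimately show ?thesis using estimate[OF that, folded c_def] by linarith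
  qed
  ultimately show ?thesis by blast
qed

end

end

theorem lemma3p4:
  fixes V :: "'a::{real_inner,complete_space} set"
    and a :: "'a \<Rightarrow> 'a \<Rightarrow> real"
    and \<sigma> :: "nat \<Rightarrow> nat"
    and d :: "nat \<Rightarrow> nat \<Rightarrow> 'a \<Rightarrow> real"
    and \<Psi> :: "nat \<Rightarrow> nat \<Rightarrow> 'a"
  assumes V_sub: "subspace V"
    \<comment> \<open>(A1): a is a symmetric bilinear positive definite form on V, complete\<close>
    and a_add: "\<And>x y z. x \<in> V \<Longrightarrow> y \<in> V \<Longrightarrow> z \<in> V \<Longrightarrow> a (x + y) z = a x z + a y z"
    and a_scale: "\<And>c x z. x \<in> V \<Longrightarrow> z \<in> V \<Longrightarrow> a (c *\<^sub>R x) z = c * a x z"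
    and a_sym: "\<And>x y. x \<in> V \<Longrightarrow> y \<in> V \<Longrightarrow> a x y = a y x"
    and a_pos: "\<And>x. x \<in> V \<Longrightarrow> x \<noteq> 0 \<Longrightarrow> a x x > 0"
    and a_complete: "\<And>s. (\<forall>n. s n \<in> V) \<Longrightarrow>
        (\<forall>e>0. \<exists>N. \<forall>m\<ge>N. \<forall>n\<ge>N. sqrt (a (s m - s n) (s m - s n)) < e) \<Longrightarrow>
        \<exists>l\<in>V. (\<lambda>n. sqrt (a (s n - l) (s n - l))) \<longlonglongrightarrow> 0"
    \<comment> \<open>(A2): dense, continuous, compact embedding\<close>
    and V_dense: "closure V = UNIV"
    and V_cont: "\<exists>C. \<forall>v\<in>V. (norm v)\<^sup>2 \<le> C * a v v"
    and V_compact: "\<And>s :: nat \<Rightarrow> 'a. (\<forall>n. s n \<in> V) \<Longrightarrow> (\<exists>B. \<forall>n. a (s n) (s n) \<le> B) \<Longrightarrow>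
        \<exists>r. strict_mono r \<and> convergent (s \<circ> r)"
    \<comment> \<open>(A4)\<close>
    and \<sigma>_mono: "strict_mono_on {1..} \<sigma>"
    and \<sigma>_pos: "\<And>M. M \<ge> 1 \<Longrightarrow> \<sigma> M \<ge> 1"
    and d_add: "\<And>M j y z. M \<ge> 1 \<Longrightarrow> j \<in> {1..\<sigma> M} \<Longrightarrow> y \<in> DA V a \<Longrightarrow> z \<in> DA V a \<Longrightarrow>
        d M j (y + z) = d M j y + d M j z"
    and d_scale: "\<And>M j c z. M \<ge> 1 \<Longrightarrow> j \<in> {1..\<sigma> M} \<Longrightarrow> z \<in> DA V a \<Longrightarrow>
        d M j (c *\<^sub>R z) = c * d M j z"
    and d_bounded: "\<And>M j. M \<ge> 1 \<Longrightarrow> j \<in> {1..\<sigma> M} \<Longrightarrow>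
        \<exists>C. \<forall>z\<in>DA V a. \<bar>d M j z\<bar> \<le> C * norm (Aop V a z)"
    and d_indep: "\<And>M c. M \<ge> 1 \<Longrightarrow> (\<forall>z\<in>DA V a. (\<Sum>j=1..\<sigma> M. c j * d M j z) = 0) \<Longrightarrow>
        \<forall>j\<in>{1..\<sigma> M}. c j = 0"
    and \<Psi>_in: "\<And>M j. M \<ge> 1 \<Longrightarrow> j \<in> {1..\<sigma> M} \<Longrightarrow> \<Psi> M j \<in> DA V a"
    and \<Psi>_indep: "\<And>M c. M \<ge> 1 \<Longrightarrow> (\<Sum>j=1..\<sigma> M. c j *\<^sub>R \<Psi> M j) = 0 \<Longrightarrow>
        \<forall>j\<in>{1..\<sigma> M}. c j = 0"
    and biorth: "\<And>M i j. M \<ge> 1 \<Longrightarrow> i \<in> {1..\<sigma> M} \<Longrightarrow> j \<in> {1..\<sigma> M} \<Longrightarrow>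
        d M j (\<Psi> M i) = (if i = j then 1 else 0)"
    and xi_lim: "((\<lambda>M. xiM V a d \<sigma> M) \<longlongrightarrow> \<infinity>) sequentially"
  shows "(\<forall>\<zeta>>0. \<exists>M\<ge>1. \<exists>lam>0. \<forall>z\<in>DA V a.
            (norm (Aop V a z))\<^sup>2 + 2 * lam * dnorm2 d \<sigma> M z \<ge> \<zeta> * a z z)
       \<and> (\<exists>Mf :: real \<Rightarrow> nat. \<exists>\<Lambda> :: real \<Rightarrow> real \<Rightarrow> real.
            mono_on {0<..} Mf \<and> (\<forall>\<zeta>>0. Mf \<zeta> \<ge> 1)
          \<and> (\<forall>\<zeta>>0. \<forall>\<omega>>0. \<Lambda> \<zeta> \<omega> > 0)
          \<and> (\<forall>\<zeta>1 \<zeta>2 \<omega>1 \<omega>2. 0 < \<zeta>1 \<and> \<zeta>1 \<le> \<zeta>2 \<and> 0 < \<omega>1 \<and> \<omega>1 \<le> \<omega>2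
                \<longrightarrow> \<Lambda> \<zeta>1 \<omega>1 \<le> \<Lambda> \<zeta>2 \<omega>2)
          \<and> (\<forall>\<zeta>>0. \<forall>\<omega>. varpi_ok V a \<Psi> \<sigma> (Mf \<zeta>) \<omega> \<longrightarrow>
               (\<forall>z\<in>DA V a. (norm (Aop V a z))\<^sup>2 + 2 * \<Lambda> \<zeta> \<omega> * dnorm2 d \<sigma> (Mf \<zeta>) z
                             \<ge> \<zeta> * a z z)))"
proof -
  interpret actuators V a \<sigma> d \<Psi>
    using V_sub a_add a_scale a_sym a_pos V_dense d_add d_scale \<Psi>_in biorth
    by unfold_locales auto
  obtain N where N_mono: "mono N" and N_ge_1: "\<And>c. N c \<ge> 1"
    and N_xi: "\<And>c n. n \<ge> N c \<Longrightarrow> ereal c \<le> xiM V a d \<sigma> n"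
    using tendsto_PInfty_threshold[OF xi_lim] by blast
  define Mf where "Mf \<zeta> = N (4 * \<zeta>)" for \<zeta> :: real
  define \<Lambda> where "\<Lambda> \<zeta> \<omega> = (\<omega>\<^sup>2 + 2 * \<zeta> * \<omega>) / 2" for \<zeta> \<omega> :: real
  have two_\<Lambda>: "2 * \<Lambda> \<zeta> \<omega> = \<omega>\<^sup>2 + 2 * \<zeta> * \<omega>" for \<zeta> \<omega>
    by (simp add: \<Lambda>_def)
  have Mf_ge_1: "Mf \<zeta> \<ge> 1" and Mf_xi: "ereal (4 * \<zeta>) \<le> xiM V a d \<sigma> (Mf \<zeta>)" for \<zeta>
    unfolding Mf_def by (rule N_ge_1, rule N_xi, rule order_refl)
  have "mono_on {0<..} Mf"
    unfolding Mf_def by (intro mono_onI monoD[OF N_mono]) simp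
  moreover have "\<forall>\<zeta>>0. \<forall>\<omega>>0. \<Lambda> \<zeta> \<omega> > 0"
    by (simp add: \<Lambda>_def add_pos_pos)
  moreover have "\<forall>\<zeta>1 \<zeta>2 \<omega>1 \<omega>2. 0 < \<zeta>1 \<and> \<zeta>1 \<le> \<zeta>2 \<and> 0 < \<omega>1 \<and> \<omega>1 \<le> \<omega>2 \<longrightarrow> \<Lambda> \<zeta>1 \<omega>1 \<le> \<Lambda> \<zeta>2 \<omega>2"
    by (auto simp: \<Lambda>_def intro!: divide_right_mono add_mono power_mono mult_mono)
  moreover have "\<forall>\<zeta>>0. \<forall>\<omega>. varpi_ok V a \<Psi> \<sigma> (Mf \<zeta>) \<omega> \<longrightarrow>
      (\<forall>z\<in>DA V a. (norm (Aop V a z))\<^sup>2 + 2 * \<Lambda> \<zeta> \<omega> * dnorm2 d \<sigma> (Mf \<zeta>) z \<ge> \<zeta> * a z z)"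
    using coercive_estimate_varpi[OF Mf_ge_1 _ _ Mf_xi] two_\<Lambda> by simp
  moreover have "\<forall>\<zeta>>0. \<exists>M\<ge>1. \<exists>lam>0. \<forall>z\<in>DA V a.
      (norm (Aop V a z))\<^sup>2 + 2 * lam * dnorm2 d \<sigma> M z \<ge> \<zeta> * a z z"
    using coercive_estimate_exists[OF Mf_ge_1 less_imp_le Mf_xi] Mf_ge_1 by blast
  ultimately show ?thesis
    using Mf_ge_1 by (intro conjI exI[of _ Mf] exI[of _ \<Lambda>]) auto
qed

end
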